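(* Let $\mathbb F\in\{\mathbb R,\mathbb C\}$ and let $\hat U,\tilde U:(0,1]\to GL_n(\mathbb F)$ be continuous, with every entry of $\hat U_\varepsilon$ and of $\tilde U_\varepsilon$ given, for $\varepsilon$ in some interval $(0,\delta)$, by a convergent Laurent series in $\varepsilon$ with finitely many negative powers. Suppose $\hat U$ contracts the Lie algebra $\mathfrak g$ to the algebra $\hat{\mathfrak g}$ and $\tilde U$ contracts $\hat{\mathfrak g}$ to the algebra $\tilde{\mathfrak g}$. Then there exists a positive integer $\nu$ such that $\check U_\varepsilon=\hat U_{\varepsilon^\nu}\tilde U_\varepsilon$ contracts $\mathfrak g$ to $\tilde{\mathfrak g}$.
   Context: All algebras are structures on the same $n$-dimensional space, given by structure constants in a fixed basis. A continuous $U:(0,1]\to GL_n(\mathbb F)$ contracts the algebra with structure constants $c^k_{ij}$ to the algebra with structure constants $c'^{k'}_{i'j'}$ if $\lim_{\varepsilon\to0^+}(U_\varepsilon)^i_{i'}(U_\varepsilon)^j_{j'}(U^{-1}_\varepsilon)^{k'}_kc^k_{ij}=c'^{k'}_{i'j'}$ for all indices (summation over repeated indices). *)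

theory Defs
  imports "HOL-Analysis.Analysis"
begin

text \<open>Structure constants: c i j k stands for c^k_{ij}, i.e. [e_i, e_j] = sum_k c^k_{ij} e_k.
  Matrix entries: (U)^i_{i'} is U $ i $ i' (row i, column i').\<close>

definition is_lie_structure :: "('n::finite \<Rightarrow> 'n \<Rightarrow> 'n \<Rightarrow> 'a::field) \<Rightarrow> bool" where
  "is_lie_structure c \<longleftrightarrow>
     (\<forall>i j k. c i j k = - c j i k) \<and>
     (\<forall>i j k m. (\<Sum>l\<in>UNIV. c i j l * c l k m + c j k l * c l i m + c k i l * c l j m) = 0)"

definition GL_path :: "(real \<Rightarrow> 'a::real_normed_field ^'n::finite^'n) \<Rightarrow> bool" where
  "GL_path U \<longleftrightarrow> continuous_on {0<..1} U \<and> (\<forall>\<epsilon>\<in>{0<..1}. invertible (U \<epsilon>))"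

definition laurent_entries :: "(real \<Rightarrow> 'a::real_normed_field ^'n::finite^'n) \<Rightarrow> bool" where
  "laurent_entries U \<longleftrightarrow>
     (\<exists>\<delta>>0. \<forall>i j. \<exists>(N::nat) (a::nat \<Rightarrow> 'a). \<forall>\<epsilon>\<in>{0<..<\<delta>}.
        summable (\<lambda>m. a m * of_real \<epsilon> ^ m) \<and>
        U \<epsilon> $ i $ j = (\<Sum>m. a m * of_real \<epsilon> ^ m) / of_real \<epsilon> ^ N)"

definition contracts ::
  "(real \<Rightarrow> 'a::real_normed_field ^'n::finite^'n) \<Rightarrow> ('n \<Rightarrow> 'n \<Rightarrow> 'n \<Rightarrow> 'a) \<Rightarrow> ('n \<Rightarrow> 'n \<Rightarrow> 'n \<Rightarrow> 'a) \<Rightarrow> bool" where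
  "contracts U c c' \<longleftrightarrow>
     (\<forall>i' j' k'. ((\<lambda>\<epsilon>. \<Sum>i\<in>UNIV. \<Sum>j\<in>UNIV. \<Sum>k\<in>UNIV.
         U \<epsilon> $ i $ i' * U \<epsilon> $ j $ j' * matrix_inv (U \<epsilon>) $ k' $ k * c i j k)
       \<longlongrightarrow> c' i' j' k') (at_right 0))"

end

theory Submission
  imports Defs "HOL-Library.Landau_Symbols"
begin

text \<open>A quotient of two convergent Laurent series in \<open>\<epsilon>\<close> is either zero near \<open>0\<close> or
  asymptotic to \<open>c \<epsilon>\<^sup>k\<close> with \<open>c > 0\<close> and \<open>k\<close> an integer. By Cramer's rule the entries of \<open>Ut \<epsilon>\<close>
  and of its inverse are such quotients, hence \<open>O(\<epsilon>\<^sup>-\<^sup>S)\<close> for some \<open>S\<close>. The structure constants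
  of \<open>g\<close> in the basis \<open>Uh \<epsilon>\<close> are such quotients as well and converge to those of \<open>gh\<close>; the
  error is again a quotient, and \<open>c \<epsilon>\<^sup>k \<rightarrow> 0\<close> forces \<open>k \<ge> 1\<close>, so the convergence has rate \<open>O(\<epsilon>)\<close>.
  Now the constants of \<open>g\<close> in the basis \<open>Uh (\<epsilon>\<^sup>\<nu>) Ut \<epsilon>\<close> are those of \<open>gh\<close> in the basis \<open>Ut \<epsilon>\<close>,
  which tend to \<open>gt\<close>, plus the basis change \<open>Ut \<epsilon>\<close> applied to an error \<open>O(\<epsilon>\<^sup>\<nu>)\<close>. That term is
  \<open>O(\<epsilon>\<^sup>-\<^sup>3\<^sup>S \<epsilon>\<^sup>\<nu>)\<close>, which tends to \<open>0\<close> for \<open>\<nu> = 3S + 1\<close>.\<close>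

section \<open>Bounds as \<open>x \<rightarrow> 0\<^sup>+\<close>\<close>

lemma eventually_at_right_0_less: "0 < r \<Longrightarrow> \<forall>\<^sub>F x in at_right 0. 0 < x \<and> x < (r::real)"
  unfolding eventually_at_right_field by (intro exI[of _ r]) auto

lemma inverse_power_mono: "0 < x \<Longrightarrow> x \<le> 1 \<Longrightarrow> S \<le> T \<Longrightarrow> 1 / x ^ S \<le> 1 / (x::real) ^ T"
  by (intro divide_left_mono power_decreasing) auto

lemma eventually_inverse_power_bound_all:
  fixes f :: "'i::finite \<Rightarrow> 'j::finite \<Rightarrow> real \<Rightarrow> 'a::real_normed_vector"
  assumes "\<And>i j. \<exists>S::nat. \<forall>\<^sub>F x in at_right 0. norm (f i j x) \<le> 1 / x ^ S"
  obtains S :: nat where "\<forall>\<^sub>F x in at_right 0. \<forall>i j. norm (f i j x) \<le> 1 / x ^ S"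
proof -
  obtain S where S: "\<And>i j. \<forall>\<^sub>F x in at_right 0. norm (f i j x) \<le> 1 / x ^ S i j"
    using assms by metis
  define T where "T = (\<Sum>p\<in>UNIV. case_prod S p)"
  have "S i j \<le> T" for i j
    using member_le_sum[of "(i, j)" UNIV "case_prod S"] unfolding T_def by simp
  have "\<forall>\<^sub>F x in at_right 0. norm (f i j x) \<le> 1 / x ^ T" for i j
    using S[of i j] eventually_at_right_0_less[OF zero_less_one]
  proof eventually_elim
    case (elim x)
    then show ?case
      using inverse_power_mono[of x "S i j" T] \<open>S i j \<le> T\<close> by simp
  qed
  then show ?thesis
    by (intro that eventually_all_finite)
qed

section \<open>Power series and Laurent series\<close>

text \<open>Absolute convergence is part of the definition so that products are again power series
  (Cauchy product).\<close>

definition powser_on :: "real \<Rightarrow> (real \<Rightarrow> 'a::{real_normed_field,banach}) \<Rightarrow> bool" where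
  "powser_on r f \<longleftrightarrow> (\<exists>a. \<forall>x. \<bar>x\<bar> < r \<longrightarrow>
     summable (\<lambda>m. norm (a m) * \<bar>x\<bar> ^ m) \<and> (\<lambda>m. a m * of_real x ^ m) sums f x)"

lemma powser_on_mono: "powser_on r f \<Longrightarrow> s \<le> r \<Longrightarrow> powser_on s f"
  unfolding powser_on_def by force

lemma powser_on_monomial: "powser_on r (\<lambda>x. c * of_real x ^ k)"
proof -
  let ?a = "\<lambda>m. if m = k then c else 0"
  have "summable (\<lambda>m. norm (?a m) * \<bar>x\<bar> ^ m)" for x :: real
    by (rule summable_finite[of "{k}"]) auto
  moreover have "(\<lambda>m. ?a m * of_real x ^ m) sums (c * of_real x ^ k)" for x :: real
  proof -
    have "(\<lambda>m. ?a m * of_real x ^ m) = (\<lambda>m. if m = k then c * of_real x ^ m else 0)"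
      by auto
    then show ?thesis
      using sums_single[of k "\<lambda>m. c * (of_real x :: 'a) ^ m"] by simp
  qed
  ultimately show ?thesis
    unfolding powser_on_def by (intro exI[of _ ?a]) blast
qed

lemma powser_on_const: "powser_on r (\<lambda>x. c)"
  using powser_on_monomial[of r c 0] by simp

lemma powser_on_add:
  assumes "powser_on r f" "powser_on r g"
  shows "powser_on r (\<lambda>x. f x + g x)"
proof -
  obtain a where
    a: "\<And>x. \<bar>x\<bar> < r \<Longrightarrow> summable (\<lambda>m. norm (a m) * \<bar>x\<bar> ^ m) \<and> (\<lambda>m. a m * of_real x ^ m) sums f x"
    using assms(1) unfolding powser_on_def by blast
  obtain b where
    b: "\<And>x. \<bar>x\<bar> < r \<Longrightarrow> summable (\<lambda>m. norm (b m) * \<bar>x\<bar> ^ m) \<and> (\<lambda>m. b m * of_real x ^ m) sums g x"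
    using assms(2) unfolding powser_on_def by blast
  have "summable (\<lambda>m. norm (a m + b m) * \<bar>x\<bar> ^ m) \<and>
        (\<lambda>m. (a m + b m) * of_real x ^ m) sums (f x + g x)" if "\<bar>x\<bar> < r" for x
  proof
    show "summable (\<lambda>m. norm (a m + b m) * \<bar>x\<bar> ^ m)"
      using summable_add[OF a[OF that, THEN conjunct1] b[OF that, THEN conjunct1]]
      by (rule summable_comparison_test[rotated])
         (auto simp: abs_mult distrib_right[symmetric] intro!: mult_right_mono norm_triangle_ineq)
    show "(\<lambda>m. (a m + b m) * of_real x ^ m) sums (f x + g x)"
      using sums_add[OF a[OF that, THEN conjunct2] b[OF that, THEN conjunct2]] by (simp add: distrib_right)
  qed
  then show ?thesis
    unfolding powser_on_def by (intro exI[of _ "\<lambda>m. a m + b m"]) blast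
qed

lemma powser_on_mult:
  assumes "powser_on r f" "powser_on r g"
  shows "powser_on r (\<lambda>x. f x * g x)"
proof -
  obtain a where
    a: "\<And>x. \<bar>x\<bar> < r \<Longrightarrow> summable (\<lambda>m. norm (a m) * \<bar>x\<bar> ^ m) \<and> (\<lambda>m. a m * of_real x ^ m) sums f x"
    using assms(1) unfolding powser_on_def by blast
  obtain b where
    b: "\<And>x. \<bar>x\<bar> < r \<Longrightarrow> summable (\<lambda>m. norm (b m) * \<bar>x\<bar> ^ m) \<and> (\<lambda>m. b m * of_real x ^ m) sums g x"
    using assms(2) unfolding powser_on_def by blast
  define c where "c k = (\<Sum>i\<le>k. a i * b (k - i))" for k
  have "summable (\<lambda>m. norm (c m) * \<bar>x\<bar> ^ m) \<and> (\<lambda>m. c m * of_real x ^ m) sums (f x * g x)"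
    if "\<bar>x\<bar> < r" for x
  proof
    have na: "summable (\<lambda>m. norm (norm (a m) * \<bar>x\<bar> ^ m))"
      and nb: "summable (\<lambda>m. norm (norm (b m) * \<bar>x\<bar> ^ m))"
      using a[OF that] b[OF that] by (simp_all add: abs_mult)
    show "summable (\<lambda>m. norm (c m) * \<bar>x\<bar> ^ m)"
    proof (rule summable_comparison_test[OF _ summable_Cauchy_product[OF na nb]], intro exI allI impI)
      fix k :: nat
      have "norm (norm (c k) * \<bar>x\<bar> ^ k) \<le> (\<Sum>i\<le>k. norm (a i * b (k - i))) * \<bar>x\<bar> ^ k"
        unfolding c_def by (simp add: abs_mult mult_right_mono norm_sum)
      also have "\<dots> = (\<Sum>i\<le>k. norm (a i) * \<bar>x\<bar> ^ i * (norm (b (k - i)) * \<bar>x\<bar> ^ (k - i)))"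
        unfolding sum_distrib_right
        by (intro sum.cong refl) (simp add: norm_mult mult_ac power_add[symmetric])
      finally show "norm (norm (c k) * \<bar>x\<bar> ^ k) \<le> \<dots>" .
    qed
    have "(\<lambda>k. \<Sum>i\<le>k. a i * of_real x ^ i * (b (k - i) * of_real x ^ (k - i))) sums
          ((\<Sum>k. a k * of_real x ^ k) * (\<Sum>k. b k * of_real x ^ k))"
      by (rule Cauchy_product_sums) (use na nb in \<open>simp_all add: norm_mult norm_power\<close>)
    moreover have "(\<lambda>k. \<Sum>i\<le>k. a i * of_real x ^ i * (b (k - i) * of_real x ^ (k - i))) =
                   (\<lambda>k. c k * of_real x ^ k)"
      unfolding c_def sum_distrib_right
      by (intro ext sum.cong refl) (simp add: mult_ac power_add[symmetric])
    ultimately show "(\<lambda>m. c m * of_real x ^ m) sums (f x * g x)"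
      using a[OF that] b[OF that] by (simp add: sums_iff)
  qed
  then show ?thesis
    unfolding powser_on_def by (intro exI[of _ c]) blast
qed

lemma powser_leading_term:
  fixes a :: "nat \<Rightarrow> 'a::{real_normed_field,banach}"
  assumes summable: "summable (\<lambda>m. norm (a m) * r ^ m)" and "0 < r"
    and below: "\<And>m. m < p \<Longrightarrow> a m = 0" and "a p \<noteq> 0"
  shows "(\<lambda>x. \<Sum>m. a m * of_real x ^ m) \<sim>[at_right 0] (\<lambda>x. a p * of_real x ^ p)"
proof -
  have summable_at: "summable (\<lambda>m. b m * z ^ m)"
    if "summable (\<lambda>m. norm (b m) * r ^ m)" "norm z < r" for b :: "nat \<Rightarrow> 'a" and z
    using powser_inside[OF summable_norm_cancel, of b "of_real r" z] that \<open>0 < r\<close>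
    by (simp add: norm_mult norm_power)
  have "summable (\<lambda>k. r ^ p * (norm (a (k + p)) * r ^ k))"
    using summable_ignore_initial_segment[OF summable, of p] by (simp add: power_add mult_ac)
  then have summable_shifted: "summable (\<lambda>k. norm (a (k + p)) * r ^ k)"
    using \<open>0 < r\<close> by simp
  define G where "G z = (\<Sum>k. a (k + p) * z ^ k)" for z :: 'a
  have split: "(\<Sum>m. a m * of_real x ^ m) = of_real x ^ p * G (of_real x)" if "0 < x" "x < r" for x
  proof -
    have "(\<Sum>m. a m * of_real x ^ m) = (\<Sum>k. a (k + p) * of_real x ^ (k + p)) + (\<Sum>m<p. a m * of_real x ^ m)"
      by (rule suminf_split_initial_segment, rule summable_at[OF summable]) (use that in simp)
    also have "\<dots> = (\<Sum>k. of_real x ^ p * (a (k + p) * of_real x ^ k))"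
      using below by (simp add: power_add mult_ac)
    also have "\<dots> = of_real x ^ p * G (of_real x)"
      unfolding G_def by (rule suminf_mult, rule summable_at[OF summable_shifted]) (use that in simp)
    finally show ?thesis .
  qed
  have "isCont G 0"
    unfolding G_def[abs_def] using \<open>0 < r\<close>
    by (intro isCont_powser[of _ "of_real (r / 2)"] summable_at[OF summable_shifted]) simp_all
  then have "((\<lambda>x::real. G (of_real x)) \<longlongrightarrow> G 0) (at_right 0)"
    by (rule isCont_tendsto_compose) (auto intro: tendsto_eq_intros)
  then have "((\<lambda>x::real. G (of_real x) / a p) \<longlongrightarrow> 1) (at_right 0)"
    using \<open>a p \<noteq> 0\<close> by (auto simp: G_def intro!: tendsto_eq_intros)
  moreover have "\<forall>\<^sub>F x in at_right 0. G (of_real x) / a p =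
      (\<Sum>m. a m * of_real x ^ m) / (a p * of_real x ^ p)"
    unfolding eventually_at_right_field using \<open>0 < r\<close> split by (intro exI[of _ r]) auto
  ultimately show ?thesis
    by (intro asymp_equivI') (rule Lim_transform_eventually)
qed

definition asymp_power :: "(real \<Rightarrow> 'a::real_normed_field) \<Rightarrow> real \<Rightarrow> bool" where
  "asymp_power f k \<longleftrightarrow> (\<exists>c>0. (\<lambda>x. norm (f x)) \<sim>[at_right 0] (\<lambda>x. c * x powr k))"

lemma asymp_power_cong:
  assumes "asymp_power f k" "\<forall>\<^sub>F x in at_right 0. f x = g x"
  shows "asymp_power g k"
proof -
  obtain c where "c > 0" "(\<lambda>x. norm (f x)) \<sim>[at_right 0] (\<lambda>x. c * x powr k)"
    using assms(1) unfolding asymp_power_def by blast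
  moreover have "\<forall>\<^sub>F x in at_right 0. norm (f x) = norm (g x)"
    using assms(2) by eventually_elim simp
  ultimately show ?thesis
    unfolding asymp_power_def by (subst (asm) asymp_equiv_cong) auto
qed

lemma asymp_power_divide:
  assumes "asymp_power f k" "asymp_power g l"
  shows "asymp_power (\<lambda>x. f x / g x) (k - l)"
proof -
  obtain c d where "c > 0" "d > 0"
    and f: "(\<lambda>x. norm (f x)) \<sim>[at_right 0] (\<lambda>x. c * x powr k)"
    and g: "(\<lambda>x. norm (g x)) \<sim>[at_right 0] (\<lambda>x. d * x powr l)"
    using assms unfolding asymp_power_def by blast
  have "(\<lambda>x. norm (f x / g x)) \<sim>[at_right 0] (\<lambda>x. c * x powr k / (d * x powr l))"
    using asymp_equiv_divide[OF f g] by (simp add: norm_divide)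
  also have "\<dots> \<sim>[at_right 0] (\<lambda>x. c / d * x powr (k - l))"
    by (rule asymp_equiv_refl_ev)
       (use eventually_at_right_less[of 0] in \<open>eventually_elim, simp add: powr_diff\<close>)
  finally show ?thesis
    unfolding asymp_power_def using \<open>c > 0\<close> \<open>d > 0\<close> by (intro exI[of _ "c / d"]) simp
qed

lemma asymp_power_bounded:
  assumes "asymp_power f k"
  obtains S :: nat where "\<forall>\<^sub>F x in at_right 0. norm (f x) \<le> 1 / x ^ S"
proof -
  obtain c where "c > 0" and f: "(\<lambda>x. norm (f x)) \<sim>[at_right 0] (\<lambda>x. c * x powr k)"
    using assms unfolding asymp_power_def by blast
  define S where "S = nat \<lceil>1 - k\<rceil>"
  have "1 - k \<le> real S"
    unfolding S_def by (rule real_nat_ceiling_ge)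
  have "\<forall>\<^sub>F x in at_right 0. 2 * c * x < 1"
    by (rule order_tendstoD) (auto intro!: tendsto_eq_intros)
  moreover have "\<forall>\<^sub>F x in at_right 0. norm (norm (f x)) \<le> 2 * norm (c * x powr k)"
    by (rule asymp_equiv_imp_eventually_le[OF f]) simp
  ultimately have "\<forall>\<^sub>F x in at_right 0. norm (f x) \<le> 1 / x ^ S"
    using eventually_at_right_0_less[OF zero_less_one]
  proof eventually_elim
    case (elim x)
    then have "norm (f x) \<le> 2 * c * x powr k"
      using \<open>c > 0\<close> by simp
    also have "\<dots> = (2 * c * x) * x powr (k - 1)"
      using elim by (simp add: powr_diff)
    also have "\<dots> \<le> x powr (k - 1)"
      using elim \<open>c > 0\<close> by (intro mult_left_le_one_le) auto
    also have "\<dots> \<le> x powr (- real S)"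
      using elim \<open>1 - k \<le> real S\<close> by (intro powr_mono') auto
    also have "\<dots> = 1 / x ^ S"
      using elim by (simp add: powr_minus_divide powr_realpow)
    finally show ?case .
  qed
  then show ?thesis
    by (rule that)
qed

lemma asymp_power_tendsto_zero_imp_pos:
  assumes "asymp_power f k" "(f \<longlongrightarrow> 0) (at_right 0)"
  shows "0 < k"
proof (rule ccontr)
  assume "\<not> 0 < k"
  obtain c where "c > 0" and f: "(\<lambda>x. norm (f x)) \<sim>[at_right 0] (\<lambda>x. c * x powr k)"
    using assms(1) unfolding asymp_power_def by blast
  have "((\<lambda>x. c * x powr k) \<longlongrightarrow> 0) (at_right 0)"
    using asymp_equiv_tendsto_transfer[OF f tendsto_norm_zero[OF assms(2)]] .
  then have "\<forall>\<^sub>F x in at_right 0. c * x powr k < c"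
    using \<open>c > 0\<close> by (rule order_tendstoD)
  then have "\<forall>\<^sub>F x::real in at_right 0. False"
    using eventually_at_right_0_less[OF zero_less_one]
  proof eventually_elim
    case (elim x)
    then have "x powr 0 \<le> x powr k"
      using \<open>\<not> 0 < k\<close> by (intro powr_mono') auto
    then show ?case
      using elim \<open>c > 0\<close> by (simp add: mult_le_cancel_left1)
  qed
  then show False
    by simp
qed

lemma asymp_power_le_linear:
  assumes "asymp_power f k" "1 \<le> k"
  obtains C where "\<forall>\<^sub>F x in at_right 0. norm (f x) \<le> C * x"
proof -
  obtain c where "c > 0" and f: "(\<lambda>x. norm (f x)) \<sim>[at_right 0] (\<lambda>x. c * x powr k)"
    using assms(1) unfolding asymp_power_def by blast
  have "\<forall>\<^sub>F x in at_right 0. norm (norm (f x)) \<le> 2 * norm (c * x powr k)"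
    by (rule asymp_equiv_imp_eventually_le[OF f]) simp
  then have "\<forall>\<^sub>F x in at_right 0. norm (f x) \<le> 2 * c * x"
    using eventually_at_right_0_less[OF zero_less_one]
  proof eventually_elim
    case (elim x)
    then have "norm (f x) \<le> 2 * c * x powr k"
      using \<open>c > 0\<close> by simp
    also have "\<dots> \<le> 2 * c * x"
      using elim \<open>c > 0\<close> \<open>1 \<le> k\<close> by (intro mult_left_mono powr_le_one_le) auto
    finally show ?case .
  qed
  then show ?thesis
    by (rule that)
qed

lemma powser_on_asymp_power:
  assumes "powser_on r f" "0 < r"
  shows "(\<forall>\<^sub>F x in at_right 0. f x = 0) \<or> (\<exists>p::nat. asymp_power f p)"
proof -
  obtain a where a: "\<And>x. \<bar>x\<bar> < r \<Longrightarrow>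
      summable (\<lambda>m. norm (a m) * \<bar>x\<bar> ^ m) \<and> (\<lambda>m. a m * of_real x ^ m) sums f x"
    using assms(1) unfolding powser_on_def by blast
  have f_eq: "\<forall>\<^sub>F x in at_right 0. f x = (\<Sum>m. a m * of_real x ^ m)"
    using eventually_at_right_0_less[OF \<open>0 < r\<close>] by eventually_elim (use a in \<open>simp add: sums_iff\<close>)
  show ?thesis
  proof (cases "\<exists>m. a m \<noteq> 0")
    case False
    then show ?thesis
      using f_eq by simp
  next
    case True
    then obtain p where p: "a p \<noteq> 0" "\<And>m. m < p \<Longrightarrow> a m = 0"
      using exists_least_iff[of "\<lambda>m. a m \<noteq> 0"] by blast
    have "summable (\<lambda>m. norm (a m) * (r / 2) ^ m)"
      using a[of "r / 2"] \<open>0 < r\<close> by simp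
    then have "(\<lambda>x. \<Sum>m. a m * of_real x ^ m) \<sim>[at_right 0] (\<lambda>x. a p * of_real x ^ p)"
      using \<open>0 < r\<close> p by (intro powser_leading_term[where r = "r / 2"]) auto
    then have "f \<sim>[at_right 0] (\<lambda>x. a p * of_real x ^ p)"
      using f_eq by (subst asymp_equiv_cong) auto
    then have "(\<lambda>x. norm (f x)) \<sim>[at_right 0] (\<lambda>x. norm (a p * of_real x ^ p))"
      by (rule asymp_equiv_norm)
    moreover have "(\<lambda>x. norm (a p * of_real x ^ p)) \<sim>[at_right 0] (\<lambda>x. norm (a p) * x powr p)"
      by (rule asymp_equiv_refl_ev)
         (use eventually_at_right_less[of 0] in \<open>eventually_elim, simp add: norm_mult norm_power powr_realpow\<close>)
    ultimately show ?thesis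
      unfolding asymp_power_def using p
      by (intro disjI2 exI[of _ p] exI[of _ "norm (a p)"]) (auto intro: asymp_equiv_trans)
  qed
qed

definition laurent_on :: "real \<Rightarrow> (real \<Rightarrow> 'a::{real_normed_field,banach}) \<Rightarrow> bool" where
  "laurent_on r f \<longleftrightarrow> (\<exists>N Q. powser_on r Q \<and> (\<forall>x\<in>{0<..<r}. f x = Q x / of_real x ^ N))"

lemma laurent_onI:
  "powser_on r Q \<Longrightarrow> (\<And>x. 0 < x \<Longrightarrow> x < r \<Longrightarrow> f x = Q x / of_real x ^ N) \<Longrightarrow> laurent_on r f"
  unfolding laurent_on_def by auto

lemma laurent_on_const: "laurent_on r (\<lambda>x. c)"
  by (rule laurent_onI[OF powser_on_const, where N = 0]) simp

lemma laurent_on_mono: "laurent_on r f \<Longrightarrow> s \<le> r \<Longrightarrow> laurent_on s f"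
  unfolding laurent_on_def using powser_on_mono by fastforce

lemma laurent_on_add:
  assumes "laurent_on r f" "laurent_on r g"
  shows "laurent_on r (\<lambda>x. f x + g x)"
proof -
  obtain M P where "powser_on r P" "\<And>x. x \<in> {0<..<r} \<Longrightarrow> f x = P x / of_real x ^ M"
    using assms(1) unfolding laurent_on_def by blast
  moreover obtain N Q where "powser_on r Q" "\<And>x. x \<in> {0<..<r} \<Longrightarrow> g x = Q x / of_real x ^ N"
    using assms(2) unfolding laurent_on_def by blast
  moreover have "powser_on r (\<lambda>x. P x * (1 * of_real x ^ N) + Q x * (1 * of_real x ^ M))"
    by (intro powser_on_add powser_on_mult powser_on_monomial calculation)
  moreover have "P x / of_real x ^ M + Q x / of_real x ^ N =
      (P x * (1 * of_real x ^ N) + Q x * (1 * of_real x ^ M)) / of_real x ^ (M + N)"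
    if "0 < x" for x
    using that by (simp add: field_simps power_add)
  ultimately show ?thesis
    by (intro laurent_onI[where N = "M + N"]) auto
qed

lemma laurent_on_mult:
  assumes "laurent_on r f" "laurent_on r g"
  shows "laurent_on r (\<lambda>x. f x * g x)"
proof -
  obtain M P where "powser_on r P" "\<And>x. x \<in> {0<..<r} \<Longrightarrow> f x = P x / of_real x ^ M"
    using assms(1) unfolding laurent_on_def by blast
  moreover obtain N Q where "powser_on r Q" "\<And>x. x \<in> {0<..<r} \<Longrightarrow> g x = Q x / of_real x ^ N"
    using assms(2) unfolding laurent_on_def by blast
  ultimately show ?thesis
    by (intro laurent_onI[OF powser_on_mult, where N = "M + N"]) (auto simp: power_add)
qed

lemma laurent_on_diff:
  assumes "laurent_on r f" "laurent_on r g"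
  shows "laurent_on r (\<lambda>x. f x - g x)"
  using laurent_on_add[OF assms(1) laurent_on_mult[OF laurent_on_const assms(2)], of "- 1"]
  by simp

lemma laurent_on_sum:
  "(\<And>i. i \<in> I \<Longrightarrow> laurent_on r (f i)) \<Longrightarrow> laurent_on r (\<lambda>x. \<Sum>i\<in>I. f i x)"
  by (induction I rule: infinite_finite_induct) (auto intro: laurent_on_const laurent_on_add)

lemma laurent_on_prod:
  "(\<And>i. i \<in> I \<Longrightarrow> laurent_on r (f i)) \<Longrightarrow> laurent_on r (\<lambda>x. \<Prod>i\<in>I. f i x)"
  by (induction I rule: infinite_finite_induct) (auto intro: laurent_on_const laurent_on_mult)

lemma laurent_on_det:
  fixes M :: "real \<Rightarrow> 'a::{real_normed_field,banach}^'n::finite^'n"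
  assumes "\<And>i j. laurent_on r (\<lambda>x. M x $ i $ j)"
  shows "laurent_on r (\<lambda>x. det (M x))"
  unfolding det_def by (intro laurent_on_sum laurent_on_mult laurent_on_const laurent_on_prod assms)

lemma laurent_on_asymp_power:
  assumes "laurent_on r f" "0 < r"
  shows "(\<forall>\<^sub>F x in at_right 0. f x = 0) \<or> (\<exists>k::int. asymp_power f k)"
proof -
  obtain N Q where "powser_on r Q" and f: "\<And>x. x \<in> {0<..<r} \<Longrightarrow> f x = Q x / of_real x ^ N"
    using assms(1) unfolding laurent_on_def by blast
  have f_eq: "\<forall>\<^sub>F x in at_right 0. Q x / of_real x ^ N = f x"
    using eventually_at_right_0_less[OF \<open>0 < r\<close>] by eventually_elim (simp add: f)
  have "(\<lambda>x. norm (of_real x ^ N :: 'a)) \<sim>[at_right 0] (\<lambda>x. 1 * x powr N)"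
    by (rule asymp_equiv_refl_ev)
       (use eventually_at_right_less[of 0] in \<open>eventually_elim, simp add: norm_power powr_realpow\<close>)
  then have "asymp_power (\<lambda>x. of_real x ^ N :: 'a) N"
    unfolding asymp_power_def by (intro exI[of _ 1]) simp
  with powser_on_asymp_power[OF \<open>powser_on r Q\<close> \<open>0 < r\<close>] show ?thesis
  proof (elim disjE exE)
    assume "\<forall>\<^sub>F x in at_right 0. Q x = 0"
    with f_eq show ?thesis
      by (auto elim: eventually_elim2)
  next
    fix p :: nat
    assume "asymp_power Q p" "asymp_power (\<lambda>x. of_real x ^ N :: 'a) N"
    then have "asymp_power f (real p - real N)"
      using asymp_power_cong[OF asymp_power_divide f_eq] by blast
    then show ?thesis
      by (intro disjI2 exI[of _ "int p - int N"]) simp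
  qed
qed

lemma laurent_on_divide_asymp_power:
  assumes "laurent_on r A" "laurent_on r B" "0 < r" and nonzero: "\<forall>x\<in>{0<..<r}. B x \<noteq> 0"
  shows "(\<forall>\<^sub>F x in at_right 0. A x / B x = 0) \<or> (\<exists>k::int. asymp_power (\<lambda>x. A x / B x) k)"
proof -
  have "\<not> (\<forall>\<^sub>F x in at_right 0. B x = 0)"
  proof
    assume "\<forall>\<^sub>F x in at_right 0. B x = 0"
    with eventually_at_right_0_less[OF \<open>0 < r\<close>] have "\<forall>\<^sub>F x::real in at_right 0. False"
      by eventually_elim (use nonzero in auto)
    then show False
      by simp
  qed
  then obtain l :: int where "asymp_power B l"
    using laurent_on_asymp_power[OF assms(2,3)] by blast
  with laurent_on_asymp_power[OF assms(1,3)] show ?thesis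
  proof (elim disjE exE)
    assume "\<forall>\<^sub>F x in at_right 0. A x = 0"
    then show ?thesis
      by (auto elim: eventually_mono)
  next
    fix k :: int
    assume "asymp_power A k"
    with \<open>asymp_power B l\<close> have "asymp_power (\<lambda>x. A x / B x) (of_int (k - l))"
      using asymp_power_divide by fastforce
    then show ?thesis
      by blast
  qed
qed

lemma laurent_on_divide_bounded:
  assumes "laurent_on r A" "laurent_on r B" "0 < r" "\<forall>x\<in>{0<..<r}. B x \<noteq> 0"
  obtains S :: nat where "\<forall>\<^sub>F x in at_right 0. norm (A x / B x) \<le> 1 / x ^ S"
proof -
  consider "\<forall>\<^sub>F x in at_right 0. A x / B x = 0" | k :: int where "asymp_power (\<lambda>x. A x / B x) k"
    using laurent_on_divide_asymp_power[OF assms] by blast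
  then show ?thesis
  proof cases
    case 1
    then have "\<forall>\<^sub>F x in at_right 0. norm (A x / B x) \<le> 1 / x ^ 0"
      by eventually_elim (simp del: divide_eq_0_iff)
    then show ?thesis
      by (rule that)
  next
    case 2
    then show ?thesis
      by (rule asymp_power_bounded) (rule that)
  qed
qed

lemma laurent_on_bounded:
  assumes "laurent_on r f" "0 < r"
  shows "\<exists>S::nat. \<forall>\<^sub>F x in at_right 0. norm (f x) \<le> 1 / x ^ S"
proof -
  have "\<forall>x\<in>{0<..<r}. (1::'a) \<noteq> 0"
    by simp
  then obtain S where "\<forall>\<^sub>F x in at_right 0. norm (f x / 1) \<le> 1 / x ^ S"
    using laurent_on_divide_bounded[OF assms(1) laurent_on_const assms(2)] by blast
  then show ?thesis
    by auto
qed

lemma laurent_on_divide_tendsto_rate: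
  assumes "laurent_on r A" "laurent_on r B" "0 < r"
    and nonzero: "\<forall>x\<in>{0<..<r}. B x \<noteq> 0"
    and lim: "((\<lambda>x. A x / B x) \<longlongrightarrow> L) (at_right 0)"
  obtains C where "\<forall>\<^sub>F x in at_right 0. norm (A x / B x - L) \<le> C * x"
proof -
  have "laurent_on r (\<lambda>x. A x - L * B x)"
    by (intro laurent_on_diff laurent_on_mult laurent_on_const assms)
  have eq: "\<forall>\<^sub>F x in at_right 0. (A x - L * B x) / B x = A x / B x - L"
    using eventually_at_right_0_less[OF \<open>0 < r\<close>]
    by eventually_elim (use nonzero in \<open>simp add: field_simps\<close>)
  from laurent_on_divide_asymp_power[OF \<open>laurent_on r (\<lambda>x. A x - L * B x)\<close> assms(2,3) nonzero]
  show ?thesis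
  proof (elim disjE exE)
    assume "\<forall>\<^sub>F x in at_right 0. (A x - L * B x) / B x = 0"
    with eq have "\<forall>\<^sub>F x in at_right 0. norm (A x / B x - L) \<le> 0 * x"
      by eventually_elim simp
    then show ?thesis
      by (rule that)
  next
    fix k :: int
    assume "asymp_power (\<lambda>x. (A x - L * B x) / B x) k"
    then have k: "asymp_power (\<lambda>x. A x / B x - L) k"
      using eq by (rule asymp_power_cong)
    moreover have "((\<lambda>x. A x / B x - L) \<longlongrightarrow> 0) (at_right 0)"
      using lim by (rule LIM_zero)
    ultimately have "0 < k"
      using asymp_power_tendsto_zero_imp_pos by fastforce
    then have "1 \<le> real_of_int k"
      by simp
    with k show ?thesis
      by (rule asymp_power_le_linear) (rule that)
  qed
qed

section \<open>Inverse matrices and change of basis\<close>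

lemma matrix_inv_right: "invertible A \<Longrightarrow> A ** matrix_inv A = mat 1"
  and matrix_inv_left: "invertible A \<Longrightarrow> matrix_inv A ** A = mat 1"
  unfolding invertible_def matrix_inv_def by (metis (mono_tags, lifting) someI_ex)+

lemma matrix_inv_unique:
  fixes A :: "'a::comm_ring_1^'n::finite^'n"
  assumes "invertible A" "A ** B = mat 1"
  shows "matrix_inv A = B"
  by (metis assms matrix_inv_left matrix_mul_assoc matrix_mul_lid matrix_mul_rid)

lemma matrix_inv_mult:
  fixes A B :: "'a::comm_ring_1^'n::finite^'n"
  assumes "invertible A" "invertible B"
  shows "matrix_inv (A ** B) = matrix_inv B ** matrix_inv A"
  by (rule matrix_inv_unique[OF invertible_mult[OF assms]])
     (metis assms matrix_inv_right matrix_mul_assoc matrix_mul_rid)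

definition adjugate :: "'a::comm_ring_1^'n::finite^'n \<Rightarrow> 'a^'n^'n" where
  "adjugate A = (\<chi> i k. det (\<chi> a b. if b = i then (if a = k then 1 else 0) else A $ a $ b))"

lemma matrix_inv_eq_adjugate:
  fixes A :: "'a::field^'n::finite^'n"
  assumes "invertible A"
  shows "matrix_inv A $ i $ k = adjugate A $ i $ k / det A"
proof -
  have "A *v (matrix_inv A *v axis k 1) = axis k 1"
    by (simp add: matrix_vector_mul_assoc matrix_inv_right[OF assms])
  then have "matrix_inv A *v axis k 1 = (\<chi> i. adjugate A $ i $ k / det A)"
    using cramer[of A] assms
    by (simp add: invertible_det_nz adjugate_def axis_def cong: if_cong)
  then show ?thesis
    by (simp add: vec_eq_iff matrix_vector_mult_def axis_def if_distrib cong: if_cong)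
qed

lemma sum_swap_3:
  "(\<Sum>i\<in>I. \<Sum>a\<in>A. \<Sum>b\<in>B. \<Sum>d\<in>D. G i a b d) = (\<Sum>a\<in>A. \<Sum>b\<in>B. \<Sum>d\<in>D. \<Sum>i\<in>I. G i a b d)"
proof -
  have "(\<Sum>i\<in>I. \<Sum>a\<in>A. \<Sum>b\<in>B. \<Sum>d\<in>D. G i a b d) = (\<Sum>a\<in>A. \<Sum>i\<in>I. \<Sum>b\<in>B. \<Sum>d\<in>D. G i a b d)"
    by (rule sum.swap)
  also have "\<dots> = (\<Sum>a\<in>A. \<Sum>b\<in>B. \<Sum>i\<in>I. \<Sum>d\<in>D. G i a b d)"
    by (rule sum.cong[OF refl], rule sum.swap)
  also have "\<dots> = (\<Sum>a\<in>A. \<Sum>b\<in>B. \<Sum>d\<in>D. \<Sum>i\<in>I. G i a b d)"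
    by (rule sum.cong[OF refl], rule sum.cong[OF refl], rule sum.swap)
  finally show ?thesis .
qed

lemma sum_swap_3_3:
  "(\<Sum>i\<in>I. \<Sum>j\<in>J. \<Sum>k\<in>K. \<Sum>a\<in>A. \<Sum>b\<in>B. \<Sum>d\<in>D. F i j k a b d) =
   (\<Sum>a\<in>A. \<Sum>b\<in>B. \<Sum>d\<in>D. \<Sum>i\<in>I. \<Sum>j\<in>J. \<Sum>k\<in>K. F i j k a b d)"
proof -
  have "(\<Sum>i\<in>I. \<Sum>j\<in>J. \<Sum>k\<in>K. \<Sum>a\<in>A. \<Sum>b\<in>B. \<Sum>d\<in>D. F i j k a b d) =
        (\<Sum>i\<in>I. \<Sum>j\<in>J. \<Sum>a\<in>A. \<Sum>b\<in>B. \<Sum>d\<in>D. \<Sum>k\<in>K. F i j k a b d)"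
    by (rule sum.cong[OF refl], rule sum.cong[OF refl], rule sum_swap_3)
  also have "\<dots> = (\<Sum>i\<in>I. \<Sum>a\<in>A. \<Sum>b\<in>B. \<Sum>d\<in>D. \<Sum>j\<in>J. \<Sum>k\<in>K. F i j k a b d)"
    by (rule sum.cong[OF refl], rule sum_swap_3)
  also have "\<dots> = (\<Sum>a\<in>A. \<Sum>b\<in>B. \<Sum>d\<in>D. \<Sum>i\<in>I. \<Sum>j\<in>J. \<Sum>k\<in>K. F i j k a b d)"
    by (rule sum_swap_3)
  finally show ?thesis .
qed

definition change_basis ::
  "'a::field^'n::finite^'n \<Rightarrow> ('n \<Rightarrow> 'n \<Rightarrow> 'n \<Rightarrow> 'a) \<Rightarrow> 'n \<Rightarrow> 'n \<Rightarrow> 'n \<Rightarrow> 'a" where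
  "change_basis U c i' j' k' =
     (\<Sum>i\<in>UNIV. \<Sum>j\<in>UNIV. \<Sum>k\<in>UNIV. U $ i $ i' * U $ j $ j' * matrix_inv U $ k' $ k * c i j k)"

lemma contracts_iff_change_basis:
  "contracts U c c' \<longleftrightarrow> (\<forall>i j k. ((\<lambda>\<epsilon>. change_basis (U \<epsilon>) c i j k) \<longlongrightarrow> c' i j k) (at_right 0))"
  unfolding contracts_def change_basis_def ..

lemma change_basis_diff:
  "change_basis U c i j k - change_basis U d i j k = change_basis U (\<lambda>i j k. c i j k - d i j k) i j k"
  unfolding change_basis_def by (simp add: sum_subtractf algebra_simps)

lemma change_basis_mult:
  fixes A B :: "'a::field^'n::finite^'n"
  assumes "invertible A" "invertible B"
  shows "change_basis (A ** B) c = change_basis B (change_basis A c)"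
proof (intro ext)
  fix i' j' k'
  let ?Ai = "matrix_inv A" and ?Bi = "matrix_inv B"
  have "change_basis (A ** B) c i' j' k' = (\<Sum>i\<in>UNIV. \<Sum>j\<in>UNIV. \<Sum>k\<in>UNIV.
     (\<Sum>a\<in>UNIV. A$i$a * B$a$i') * (\<Sum>b\<in>UNIV. A$j$b * B$b$j') * (\<Sum>d\<in>UNIV. ?Bi$k'$d * ?Ai$d$k) * c i j k)"
    unfolding change_basis_def matrix_inv_mult[OF assms] by (simp add: matrix_matrix_mult_def)
  also have "\<dots> = (\<Sum>i\<in>UNIV. \<Sum>j\<in>UNIV. \<Sum>k\<in>UNIV. \<Sum>b\<in>UNIV. \<Sum>a\<in>UNIV. \<Sum>d\<in>UNIV.
     B$a$i' * B$b$j' * ?Bi$k'$d * (A$i$a * A$j$b * ?Ai$d$k * c i j k))"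
    by (simp add: sum_distrib_left sum_distrib_right mult_ac)
  also have "\<dots> = (\<Sum>i\<in>UNIV. \<Sum>j\<in>UNIV. \<Sum>k\<in>UNIV. \<Sum>a\<in>UNIV. \<Sum>b\<in>UNIV. \<Sum>d\<in>UNIV.
     B$a$i' * B$b$j' * ?Bi$k'$d * (A$i$a * A$j$b * ?Ai$d$k * c i j k))"
    by (rule sum.cong[OF refl], rule sum.cong[OF refl], rule sum.cong[OF refl], rule sum.swap)
  also have "\<dots> = (\<Sum>a\<in>UNIV. \<Sum>b\<in>UNIV. \<Sum>d\<in>UNIV. \<Sum>i\<in>UNIV. \<Sum>j\<in>UNIV. \<Sum>k\<in>UNIV.
     B$a$i' * B$b$j' * ?Bi$k'$d * (A$i$a * A$j$b * ?Ai$d$k * c i j k))"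
    by (rule sum_swap_3_3)
  also have "\<dots> = change_basis B (change_basis A c) i' j' k'"
    unfolding change_basis_def by (simp add: sum_distrib_left)
  finally show "change_basis (A ** B) c i' j' k' = change_basis B (change_basis A c) i' j' k'" .
qed

section \<open>Paths with Laurent entries\<close>

lemma laurent_entries_imp_laurent_on:
  fixes U :: "real \<Rightarrow> 'a::{real_normed_field,banach}^'n::finite^'n"
  assumes "laurent_entries U"
  obtains r where "0 < r" "r \<le> 1" "\<And>i j. laurent_on r (\<lambda>x. U x $ i $ j)"
proof -
  obtain \<delta> where "\<delta> > 0" and entries: "\<And>i j. \<exists>(N::nat) (a::nat \<Rightarrow> 'a). \<forall>\<epsilon>\<in>{0<..<\<delta>}.
      summable (\<lambda>m. a m * of_real \<epsilon> ^ m) \<and> U \<epsilon> $ i $ j = (\<Sum>m. a m * of_real \<epsilon> ^ m) / of_real \<epsilon> ^ N"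
    using assms unfolding laurent_entries_def by blast
  have "laurent_on \<delta> (\<lambda>x. U x $ i $ j)" for i j
  proof -
    obtain N a where Na: "\<And>\<epsilon>. \<epsilon> \<in> {0<..<\<delta>} \<Longrightarrow> summable (\<lambda>m. a m * of_real \<epsilon> ^ m) \<and>
        U \<epsilon> $ i $ j = (\<Sum>m. a m * of_real \<epsilon> ^ m) / of_real \<epsilon> ^ N"
      using entries by metis
    have abs_summable: "summable (\<lambda>m. norm (a m * of_real x ^ m))" if "\<bar>x\<bar> < \<delta>" for x :: real
    proof -
      define t where "t = (\<bar>x\<bar> + \<delta>) / 2"
      have "t \<in> {0<..<\<delta>}" "\<bar>x\<bar> < t"
        using that unfolding t_def by auto
      then show ?thesis
        using Na by (intro powser_insidea[of a "of_real t"]) auto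
    qed
    have "powser_on \<delta> (\<lambda>x. \<Sum>m. a m * of_real x ^ m)"
      unfolding powser_on_def
    proof (intro exI[of _ a] allI impI conjI)
      fix x :: real
      assume "\<bar>x\<bar> < \<delta>"
      then show "summable (\<lambda>m. norm (a m) * \<bar>x\<bar> ^ m)"
        using abs_summable by (simp add: norm_mult norm_power)
      show "(\<lambda>m. a m * of_real x ^ m) sums (\<Sum>m. a m * of_real x ^ m)"
        by (rule summable_sums[OF summable_norm_cancel[OF abs_summable]]) fact
    qed
    then show ?thesis
      by (rule laurent_onI[where N = N]) (use Na in auto)
  qed
  then show ?thesis
    using \<open>\<delta> > 0\<close> by (intro that[of "min \<delta> 1"] laurent_on_mono[OF _ min.cobounded1]) auto
qed

lemma laurent_on_adjugate:
  fixes M :: "real \<Rightarrow> 'a::{real_normed_field,banach}^'n::finite^'n"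
  assumes "\<And>i j. laurent_on r (\<lambda>x. M x $ i $ j)"
  shows "laurent_on r (\<lambda>x. adjugate (M x) $ i $ k)"
proof -
  have "laurent_on r (\<lambda>x. det (\<chi> a b. if b = i then (if a = k then 1 else 0) else M x $ a $ b))"
  proof (rule laurent_on_det)
    fix a b
    show "laurent_on r (\<lambda>x. (\<chi> a b. if b = i then (if a = k then 1 else 0) else M x $ a $ b) $ a $ b)"
      by (cases "b = i") (simp_all add: laurent_on_const assms)
  qed
  then show ?thesis
    by (simp add: adjugate_def)
qed

lemma laurent_path_cramer:
  fixes U :: "real \<Rightarrow> 'a::{real_normed_field,banach}^'n::finite^'n"
  assumes invertible: "\<forall>\<epsilon>\<in>{0<..1}. invertible (U \<epsilon>)" and "laurent_entries U"
  obtains r where "0 < r" "\<And>i j. laurent_on r (\<lambda>x. U x $ i $ j)" "\<forall>x\<in>{0<..<r}. det (U x) \<noteq> 0"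
    "\<And>x i j. x \<in> {0<..<r} \<Longrightarrow> matrix_inv (U x) $ i $ j = adjugate (U x) $ i $ j / det (U x)"
proof -
  obtain r where "0 < r" "r \<le> 1" and entries: "\<And>i j. laurent_on r (\<lambda>x. U x $ i $ j)"
    using laurent_entries_imp_laurent_on[OF \<open>laurent_entries U\<close>] by blast
  have "invertible (U x)" if "x \<in> {0<..<r}" for x
    using invertible that \<open>r \<le> 1\<close> by auto
  then show ?thesis
    by (intro that[OF \<open>0 < r\<close> entries]) (auto simp: invertible_det_nz matrix_inv_eq_adjugate)
qed

lemma laurent_path_bounded:
  fixes U :: "real \<Rightarrow> 'a::{real_normed_field,banach}^'n::finite^'n"
  assumes "\<forall>\<epsilon>\<in>{0<..1}. invertible (U \<epsilon>)" "laurent_entries U"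
  obtains S :: nat where "\<forall>\<^sub>F x in at_right 0. \<forall>i j.
    norm (U x $ i $ j) \<le> 1 / x ^ S \<and> norm (matrix_inv (U x) $ i $ j) \<le> 1 / x ^ S"
proof -
  obtain r where "0 < r" and entries: "\<And>i j. laurent_on r (\<lambda>x. U x $ i $ j)"
    and det: "\<forall>x\<in>{0<..<r}. det (U x) \<noteq> 0"
    and inverse: "\<And>x i j. x \<in> {0<..<r} \<Longrightarrow> matrix_inv (U x) $ i $ j = adjugate (U x) $ i $ j / det (U x)"
    using laurent_path_cramer[OF assms] by blast
  obtain S1 where S1: "\<forall>\<^sub>F x in at_right 0. \<forall>i j. norm (U x $ i $ j) \<le> 1 / x ^ S1"
    using eventually_inverse_power_bound_all[of "\<lambda>i j x. U x $ i $ j"] laurent_on_bounded[OF entries \<open>0 < r\<close>]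
    by blast
  have "\<exists>S::nat. \<forall>\<^sub>F x in at_right 0. norm (matrix_inv (U x) $ i $ j) \<le> 1 / x ^ S" for i j
  proof -
    obtain S where "\<forall>\<^sub>F x in at_right 0. norm (adjugate (U x) $ i $ j / det (U x)) \<le> 1 / x ^ S"
      using laurent_on_divide_bounded[OF laurent_on_adjugate[OF entries] laurent_on_det[OF entries] \<open>0 < r\<close> det]
      by blast
    then have "\<forall>\<^sub>F x in at_right 0. norm (matrix_inv (U x) $ i $ j) \<le> 1 / x ^ S"
      using eventually_at_right_0_less[OF \<open>0 < r\<close>] by eventually_elim (simp add: inverse)
    then show ?thesis ..
  qed
  then obtain S2 where S2: "\<forall>\<^sub>F x in at_right 0. \<forall>i j. norm (matrix_inv (U x) $ i $ j) \<le> 1 / x ^ S2"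
    using eventually_inverse_power_bound_all[of "\<lambda>i j x. matrix_inv (U x) $ i $ j"] by blast
  have "\<forall>\<^sub>F x in at_right 0. \<forall>i j.
      norm (U x $ i $ j) \<le> 1 / x ^ (S1 + S2) \<and> norm (matrix_inv (U x) $ i $ j) \<le> 1 / x ^ (S1 + S2)"
    using S1 S2 eventually_at_right_0_less[OF zero_less_one]
  proof eventually_elim
    case (elim x)
    then have "1 / x ^ S1 \<le> 1 / x ^ (S1 + S2)" "1 / x ^ S2 \<le> 1 / x ^ (S1 + S2)"
      by (simp_all add: inverse_power_mono)
    with elim show ?case
      by (meson order_trans)
  qed
  then show ?thesis
    by (rule that)
qed

lemma laurent_path_change_basis_rate:
  fixes U :: "real \<Rightarrow> 'a::{real_normed_field,banach}^'n::finite^'n"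
  assumes "\<forall>\<epsilon>\<in>{0<..1}. invertible (U \<epsilon>)" "laurent_entries U"
    and lim: "((\<lambda>x. change_basis (U x) c i' j' k') \<longlongrightarrow> L) (at_right 0)"
  obtains C where "\<forall>\<^sub>F x in at_right 0. norm (change_basis (U x) c i' j' k' - L) \<le> C * x"
proof -
  obtain r where "0 < r" and entries: "\<And>i j. laurent_on r (\<lambda>x. U x $ i $ j)"
    and det: "\<forall>x\<in>{0<..<r}. det (U x) \<noteq> 0"
    and inverse: "\<And>x i j. x \<in> {0<..<r} \<Longrightarrow> matrix_inv (U x) $ i $ j = adjugate (U x) $ i $ j / det (U x)"
    using laurent_path_cramer[OF assms(1,2)] by blast
  define A where "A x = (\<Sum>i\<in>UNIV. \<Sum>j\<in>UNIV. \<Sum>k\<in>UNIV.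
      U x $ i $ i' * U x $ j $ j' * adjugate (U x) $ k' $ k * c i j k)" for x
  have "laurent_on r A"
    unfolding A_def by (intro laurent_on_sum laurent_on_mult laurent_on_const entries laurent_on_adjugate)
  have eq: "\<forall>\<^sub>F x in at_right 0. A x / det (U x) = change_basis (U x) c i' j' k'"
    using eventually_at_right_0_less[OF \<open>0 < r\<close>]
    by eventually_elim (simp add: A_def change_basis_def inverse sum_divide_distrib)
  then have "((\<lambda>x. A x / det (U x)) \<longlongrightarrow> L) (at_right 0)"
    using tendsto_cong[OF eq] lim by blast
  then obtain C where "\<forall>\<^sub>F x in at_right 0. norm (A x / det (U x) - L) \<le> C * x"
    using laurent_on_divide_tendsto_rate[OF \<open>laurent_on r A\<close> laurent_on_det[OF entries] \<open>0 < r\<close> det]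
    by blast
  with eq have "\<forall>\<^sub>F x in at_right 0. norm (change_basis (U x) c i' j' k' - L) \<le> C * x"
    by eventually_elim simp
  then show ?thesis
    by (rule that)
qed

section \<open>Composing contractions\<close>

lemma tendsto_zero_growth_times_decay:
  fixes a d :: "real \<Rightarrow> 'a::real_normed_field"
  assumes growth: "\<forall>\<^sub>F x in at_right 0. norm (a x) \<le> 1 / x ^ m"
    and decay: "\<forall>\<^sub>F y in at_right 0. norm (d y) \<le> C * y"
  shows "((\<lambda>x. a x * d (x ^ Suc m)) \<longlongrightarrow> 0) (at_right 0)"
proof -
  have "((\<lambda>x::real. x ^ Suc m) \<longlongrightarrow> 0) (at_right 0)"
    by (auto intro!: tendsto_eq_intros)
  moreover have "\<forall>\<^sub>F x in at_right 0. 0 < (x::real) ^ Suc m"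
    using eventually_at_right_less[of 0] by eventually_elim simp
  ultimately have "filterlim (\<lambda>x::real. x ^ Suc m) (at_right 0) (at_right 0)"
    by (rule tendsto_imp_filterlim_at_right)
  then have "\<forall>\<^sub>F x in at_right 0. norm (d (x ^ Suc m)) \<le> C * x ^ Suc m"
    by (rule eventually_compose_filterlim[OF decay])
  with growth have "\<forall>\<^sub>F x in at_right 0. norm (a x * d (x ^ Suc m)) \<le> C * x"
    using eventually_at_right_less[of 0]
  proof eventually_elim
    case (elim x)
    then have "norm (a x * d (x ^ Suc m)) \<le> 1 / x ^ m * (C * x ^ Suc m)"
      unfolding norm_mult by (intro mult_mono) auto
    also have "\<dots> = C * x"
      using elim by simp
    finally show ?case .
  qed
  moreover have "((\<lambda>x. C * x) \<longlongrightarrow> 0) (at_right (0::real))"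
    by (auto intro!: tendsto_eq_intros)
  ultimately show ?thesis
    by (rule Lim_null_comparison)
qed

lemma change_basis_tendsto_zero:
  fixes U :: "real \<Rightarrow> 'a::real_normed_field^'n::finite^'n"
  assumes bounded: "\<forall>\<^sub>F x in at_right 0. \<forall>i j.
      norm (U x $ i $ j) \<le> 1 / x ^ S \<and> norm (matrix_inv (U x) $ i $ j) \<le> 1 / x ^ S"
    and decay: "\<And>i j k. \<exists>C. \<forall>\<^sub>F y in at_right 0. norm (d y i j k) \<le> C * y"
  shows "((\<lambda>x. change_basis (U x) (d (x ^ Suc (3 * S))) i' j' k') \<longlongrightarrow> 0) (at_right 0)"
  unfolding change_basis_def
proof (intro tendsto_null_sum)
  fix i j k
  have "\<forall>\<^sub>F x in at_right 0. norm (U x $ i $ i' * U x $ j $ j' * matrix_inv (U x) $ k' $ k) \<le> 1 / x ^ (3 * S)"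
    using bounded eventually_at_right_less[of 0]
  proof eventually_elim
    case (elim x)
    then have "norm (U x $ i $ i' * U x $ j $ j' * matrix_inv (U x) $ k' $ k) \<le>
        1 / x ^ S * (1 / x ^ S) * (1 / x ^ S)"
      unfolding norm_mult by (intro mult_mono) auto
    then show ?case
      by (simp add: numeral_3_eq_3 power_add mult_ac)
  qed
  moreover obtain C where "\<forall>\<^sub>F y in at_right 0. norm (d y i j k) \<le> C * y"
    using decay by blast
  ultimately show "((\<lambda>x. U x $ i $ i' * U x $ j $ j' * matrix_inv (U x) $ k' $ k *
      d (x ^ Suc (3 * S)) i j k) \<longlongrightarrow> 0) (at_right 0)"
    by (rule tendsto_zero_growth_times_decay)
qed

lemma contracts_compose:
  fixes Uh Ut :: "real \<Rightarrow> 'a::{real_normed_field,banach}^'n::finite^'n"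
  assumes invertible: "\<forall>\<epsilon>\<in>{0<..1}. invertible (Uh \<epsilon>)" "\<forall>\<epsilon>\<in>{0<..1}. invertible (Ut \<epsilon>)"
    and laurent: "laurent_entries Uh" "laurent_entries Ut"
    and contracts: "contracts Uh g gh" "contracts Ut gh gt"
  shows "\<exists>\<nu>::nat. \<nu> > 0 \<and> contracts (\<lambda>\<epsilon>. Uh (\<epsilon> ^ \<nu>) ** Ut \<epsilon>) g gt"
proof -
  obtain S where S: "\<forall>\<^sub>F x in at_right 0. \<forall>i j.
      norm (Ut x $ i $ j) \<le> 1 / x ^ S \<and> norm (matrix_inv (Ut x) $ i $ j) \<le> 1 / x ^ S"
    using laurent_path_bounded[OF invertible(2) laurent(2)] by blast
  define \<nu> where "\<nu> = Suc (3 * S)"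
  define D where "D y i j k = change_basis (Uh y) g i j k - gh i j k" for y i j k
  have "\<exists>C. \<forall>\<^sub>F y in at_right 0. norm (D y i j k) \<le> C * y" for i j k
    using contracts(1) laurent_path_change_basis_rate[OF invertible(1) laurent(1)]
    unfolding contracts_iff_change_basis D_def by blast
  then have error: "((\<lambda>\<epsilon>. change_basis (Ut \<epsilon>) (D (\<epsilon> ^ \<nu>)) i' j' k') \<longlongrightarrow> 0) (at_right 0)" for i' j' k'
    unfolding \<nu>_def by (rule change_basis_tendsto_zero[OF S])
  have split: "\<forall>\<^sub>F \<epsilon> in at_right 0. change_basis (Ut \<epsilon>) gh i' j' k' + change_basis (Ut \<epsilon>) (D (\<epsilon> ^ \<nu>)) i' j' k' =
      change_basis (Uh (\<epsilon> ^ \<nu>) ** Ut \<epsilon>) g i' j' k'" for i' j' k'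
    using eventually_at_right_0_less[OF zero_less_one]
  proof eventually_elim
    case (elim \<epsilon>)
    then have "invertible (Uh (\<epsilon> ^ \<nu>))" "invertible (Ut \<epsilon>)"
      using invertible by (auto simp: power_le_one)
    then show ?case
      by (simp add: change_basis_mult change_basis_diff[symmetric] D_def[abs_def])
  qed
  have "contracts (\<lambda>\<epsilon>. Uh (\<epsilon> ^ \<nu>) ** Ut \<epsilon>) g gt"
    unfolding contracts_iff_change_basis
  proof (intro allI)
    fix i' j' k'
    have "((\<lambda>\<epsilon>. change_basis (Ut \<epsilon>) gh i' j' k') \<longlongrightarrow> gt i' j' k') (at_right 0)"
      using contracts(2) unfolding contracts_iff_change_basis by blast
    from tendsto_add[OF this error]
    have "((\<lambda>\<epsilon>. change_basis (Ut \<epsilon>) gh i' j' k' + change_basis (Ut \<epsilon>) (D (\<epsilon> ^ \<nu>)) i' j' k')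
        \<longlongrightarrow> gt i' j' k') (at_right 0)"
      by simp
    then show "((\<lambda>\<epsilon>. change_basis (Uh (\<epsilon> ^ \<nu>) ** Ut \<epsilon>) g i' j' k') \<longlongrightarrow> gt i' j' k') (at_right 0)"
      using split by (rule Lim_transform_eventually)
  qed
  then show ?thesis
    unfolding \<nu>_def by blast
qed

theorem mainTheorem12:
  shows "(\<forall>(Uh::real \<Rightarrow> real^'n::finite^'n) Ut g gh gt.
            GL_path Uh \<and> GL_path Ut \<and> laurent_entries Uh \<and> laurent_entries Ut \<and>
            is_lie_structure g \<and> contracts Uh g gh \<and> contracts Ut gh gt \<longrightarrow>
            (\<exists>\<nu>::nat. \<nu> > 0 \<and> contracts (\<lambda>\<epsilon>. Uh (\<epsilon> ^ \<nu>) ** Ut \<epsilon>) g gt))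
       \<and> (\<forall>(Uh::real \<Rightarrow> complex^'n::finite^'n) Ut g gh gt.
            GL_path Uh \<and> GL_path Ut \<and> laurent_entries Uh \<and> laurent_entries Ut \<and>
            is_lie_structure g \<and> contracts Uh g gh \<and> contracts Ut gh gt \<longrightarrow>
            (\<exists>\<nu>::nat. \<nu> > 0 \<and> contracts (\<lambda>\<epsilon>. Uh (\<epsilon> ^ \<nu>) ** Ut \<epsilon>) g gt))"
  by (auto simp: GL_path_def intro!: contracts_compose)

end
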